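(* Let $k\ge1$ be an integer and $a,b,c\in\mathbb{C}$ such that $2c,\ 2c+2,\ \frac{a+b+1}{2},\ \frac{a+b+3}{2},\ \frac{a+b+5}{2}\notin\{0,-1,-2,\dots\}$, $2c+1\neq0$, and $\mathrm{Re}(2c-a-b-2k+1)>0$. Define $$G_k(a,b,c)={}_3F_2\!\left(\left.\begin{array}{c}a+k,\ b,\ c\\ \frac{a+b+1}{2},\ 2c\end{array}\right|1\right).$$ Then $$G_k(a,b,c)=G_{k-1}(a,b,c)+\frac{b}{a+b+1}\left[\frac{(a+k)(b+1)}{(2c+1)(a+b+3)}\,G_{k-1}(a+2,b+2,c+1)+G_{k-1}(a+1,b+1,c)\right].$$
   Context: ${}_3F_2(a_1,a_2,a_3;b_1,b_2;1)=\sum_{m\ge0}\frac{(a_1)_m(a_2)_m(a_3)_m}{m!\,(b_1)_m(b_2)_m}$ with $(\alpha)_m=\Gamma(\alpha+m)/\Gamma(\alpha)$, absolutely convergent when $\mathrm{Re}(b_1+b_2-a_1-a_2-a_3)>0$. Note $G_{k-1}(a+2,b+2,c+1)={}_3F_2(a+k+1,b+2,c+1;\frac{a+b+5}{2},2c+2;1)$ and $G_{k-1}(a+1,b+1,c)={}_3F_2(a+k,b+1,c;\frac{a+b+3}{2},2c;1)$. *)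

theory Defs
  imports "HOL-Analysis.Analysis"
begin

definition hyp3F2 :: "complex \<Rightarrow> complex \<Rightarrow> complex \<Rightarrow> complex \<Rightarrow> complex \<Rightarrow> complex" where
  "hyp3F2 a1 a2 a3 b1 b2 =
     (\<Sum>m. pochhammer a1 m * pochhammer a2 m * pochhammer a3 m /
           (fact m * pochhammer b1 m * pochhammer b2 m))"

definition G :: "nat \<Rightarrow> complex \<Rightarrow> complex \<Rightarrow> complex \<Rightarrow> complex" where
  "G k a b c = hyp3F2 (a + of_nat k) b c ((a + b + 1) / 2) (2 * c)"

end

theory Submission
  imports Defs "HOL-Real_Asymp.Real_Asymp"
begin

text \<open>
  Two termwise contiguous relations drive the proof. By
  (a+1)_(n+1) - (a)_(n+1) = (n+1) (a+1)_n  and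
  (c+1)_(n+1)/(2c+1)_(n+1) - (c)_(n+1)/(2c)_(n+1) = (n+1) (c+1)_n / (2 (2c+1) (2c+2)_n),
  the difference of the (n+1)-st terms of two neighbouring 3F2 series is a constant multiple
  of the n-th term of a third one, so summing over n gives a linear relation between three 3F2's.
  The first relation applied to a+k = (a+k-1)+1, followed by the second one, is the theorem.
  All series involved converge absolutely because (z)_(n+1)/n! = O(n powr Re z), which is read
  off from Euler's limit formula for the Gamma function.
\<close>

definition hyp3F2_term :: "complex \<Rightarrow> complex \<Rightarrow> complex \<Rightarrow> complex \<Rightarrow> complex \<Rightarrow> nat \<Rightarrow> complex" where
  "hyp3F2_term a1 a2 a3 b1 b2 m =
     pochhammer a1 m * pochhammer a2 m * pochhammer a3 m / (fact m * pochhammer b1 m * pochhammer b2 m)"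

lemma hyp3F2_eq_suminf: "hyp3F2 a1 a2 a3 b1 b2 = (\<Sum>m. hyp3F2_term a1 a2 a3 b1 b2 m)"
  by (simp add: hyp3F2_def hyp3F2_term_def)

lemma hyp3F2_term_0 [simp]: "hyp3F2_term a1 a2 a3 b1 b2 0 = 1"
  by (simp add: hyp3F2_term_def)

lemma pochhammer_Suc_div_fact_bigo:
  "(\<lambda>n. norm (pochhammer z (Suc n) / fact n)) \<in> O(\<lambda>n. real n powr Re z)"
proof -
  have "Bseq (rGamma_series z)"
    using rGamma_series_LIMSEQ by (rule convergent_imp_Bseq[OF convergentI])
  then obtain B where "B > 0" and B: "\<And>n. norm (rGamma_series z n) \<le> B"
    by (auto elim: BseqE)
  have bound: "norm (pochhammer z (Suc n) / fact n) \<le> B * real n powr Re z" if "n > 0" for n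
  proof -
    have "pochhammer z (Suc n) / fact n = rGamma_series z n * exp (z * of_real (ln (of_nat n)))"
      by (simp add: rGamma_series_def)
    then have "norm (pochhammer z (Suc n) / fact n) = norm (rGamma_series z n) * real n powr Re z"
      using that by (simp add: norm_mult powr_def mult.commute)
    then show ?thesis
      using B[of n] by (simp add: mult_right_mono)
  qed
  have "eventually (\<lambda>n. norm (norm (pochhammer z (Suc n) / fact n)) \<le> B * norm (real n powr Re z)) at_top"
    by (intro eventually_mono[OF eventually_gt_at_top[of 0]]) (simp add: bound)
  with \<open>B > 0\<close> show ?thesis
    by (rule landau_o.bigI)
qed

lemma fact_div_pochhammer_Suc_bigo:
  "(\<lambda>n. norm (fact n / pochhammer z (Suc n))) \<in> O(\<lambda>n. real n powr - Re z)"
proof -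
  have "Bseq (Gamma_series z)"
    using Gamma_series_LIMSEQ by (rule convergent_imp_Bseq[OF convergentI])
  then obtain B where "B > 0" and B: "\<And>n. norm (Gamma_series z n) \<le> B"
    by (auto elim: BseqE)
  have bound: "norm (fact n / pochhammer z (Suc n)) \<le> B * real n powr - Re z" if "n > 0" for n
  proof -
    have "fact n / pochhammer z (Suc n) = Gamma_series z n / exp (z * of_real (ln (of_nat n)))"
      by (simp add: Gamma_series_def)
    then have "norm (fact n / pochhammer z (Suc n)) = norm (Gamma_series z n) * real n powr - Re z"
      using that by (simp add: divide_inverse norm_mult norm_inverse powr_def exp_minus mult.commute)
    then show ?thesis
      using B[of n] by (simp add: mult_right_mono)
  qed
  have "eventually (\<lambda>n. norm (norm (fact n / pochhammer z (Suc n))) \<le> B * norm (real n powr - Re z)) at_top"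
    by (intro eventually_mono[OF eventually_gt_at_top[of 0]]) (simp add: bound)
  with \<open>B > 0\<close> show ?thesis
    by (rule landau_o.bigI)
qed

lemma norm_hyp3F2_term_Suc:
  "norm (hyp3F2_term a1 a2 a3 b1 b2 (Suc n)) =
     norm (pochhammer a1 (Suc n) / fact n) * norm (pochhammer a2 (Suc n) / fact n)
     * norm (pochhammer a3 (Suc n) / fact n) * norm (fact n / pochhammer b1 (Suc n))
     * norm (fact n / pochhammer b2 (Suc n)) / real (Suc n)"
proof -
  have "hyp3F2_term a1 a2 a3 b1 b2 (Suc n) =
     pochhammer a1 (Suc n) / fact n * (pochhammer a2 (Suc n) / fact n) * (pochhammer a3 (Suc n) / fact n)
     * (fact n / pochhammer b1 (Suc n)) * (fact n / pochhammer b2 (Suc n)) / of_nat (Suc n)"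
    by (simp add: hyp3F2_term_def divide_inverse inverse_mult_distrib mult_ac del: of_nat_Suc)
      (simp add: field_simps)
  then show ?thesis
    by (simp add: norm_mult norm_divide del: of_nat_Suc)
qed

lemma summable_hyp3F2_term:
  assumes "Re (b1 + b2 - a1 - a2 - a3) > 0"
  shows "summable (hyp3F2_term a1 a2 a3 b1 b2)"
proof -
  define s where "s = Re (b1 + b2 - a1 - a2 - a3)"
  have "(\<lambda>n. norm (pochhammer a1 (Suc n) / fact n) * norm (pochhammer a2 (Suc n) / fact n)
     * norm (pochhammer a3 (Suc n) / fact n) * norm (fact n / pochhammer b1 (Suc n))
     * norm (fact n / pochhammer b2 (Suc n)))
    \<in> O(\<lambda>n. real n powr Re a1 * real n powr Re a2 * real n powr Re a3
       * real n powr - Re b1 * real n powr - Re b2)"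
    by (intro landau_o.big.mult pochhammer_Suc_div_fact_bigo fact_div_pochhammer_Suc_bigo)
  also have "(\<lambda>n. real n powr Re a1 * real n powr Re a2 * real n powr Re a3
       * real n powr - Re b1 * real n powr - Re b2) \<in> \<Theta>(\<lambda>n. real n powr - s)"
    by (intro bigthetaI_cong eventually_mono[OF eventually_gt_at_top[of 0]])
      (simp add: s_def powr_add[symmetric] algebra_simps)
  finally have "(\<lambda>n. norm (hyp3F2_term a1 a2 a3 b1 b2 (Suc n))) \<in> O(\<lambda>n. real n powr - s / real (Suc n))"
    unfolding norm_hyp3F2_term_Suc by (intro landau_o.big.divide_right) auto
  also have "(\<lambda>n. real n powr - s / real (Suc n)) \<in> O(\<lambda>n. real n powr (- 1 - s))"
    by real_asymp
  finally have "summable (\<lambda>n. norm (hyp3F2_term a1 a2 a3 b1 b2 (Suc n)))"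
    by (rule summable_comparison_test_bigo[rotated]) (use assms in \<open>simp add: s_def summable_real_powr_iff\<close>)
  then show ?thesis
    by (subst summable_Suc_iff[symmetric]) (rule summable_norm_cancel)
qed

lemma pochhammer_Suc_diff:
  fixes a :: "'a :: comm_ring_1"
  shows "pochhammer (a + 1) (Suc n) - pochhammer a (Suc n) = of_nat (Suc n) * pochhammer (a + 1) n"
  unfolding pochhammer_rec'[of "a + 1"] pochhammer_rec[of a] by (simp add: algebra_simps)

lemma pochhammer_ratio_Suc_diff:
  fixes c :: "'a :: field_char_0"
  assumes "2 * c \<notin> \<int>\<^sub>\<le>\<^sub>0"
  shows "pochhammer (c + 1) (Suc n) / pochhammer (2 * c + 1) (Suc n) - pochhammer c (Suc n) / pochhammer (2 * c) (Suc n)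
     = of_nat (Suc n) * pochhammer (c + 1) n / (2 * (2 * c + 1) * pochhammer (2 * c + 2) n)"
proof -
  define P where "P = pochhammer (c + 1) n"
  define Q where "Q = pochhammer (2 * c + 1) n"
  define w where "w = 2 * c + 1 + of_nat n"
  have "c \<noteq> 0"
    using assms by auto
  have "2 * c + 1 \<notin> \<int>\<^sub>\<le>\<^sub>0"
    using assms nonpos_Ints_diff_Nats[of "2 * c + 1" 1] by auto
  then have "Q \<noteq> 0" "w \<noteq> 0"
    by (auto simp: Q_def w_def pochhammer_eq_0_iff dest: plus_of_nat_eq_0_imp)
  have "pochhammer (c + 1) (Suc n) / pochhammer (2 * c + 1) (Suc n) - pochhammer c (Suc n) / pochhammer (2 * c) (Suc n)
      = (c + 1 + of_nat n) * P / (w * Q) - c * P / (2 * c * Q)"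
    unfolding P_def Q_def w_def pochhammer_rec'[of "c + 1"] pochhammer_rec'[of "2 * c + 1"]
      pochhammer_rec[of c] pochhammer_rec[of "2 * c"] ..
  also have "\<dots> = ((c + 1 + of_nat n) / w - 1 / 2) * (P / Q)"
    using \<open>c \<noteq> 0\<close> \<open>Q \<noteq> 0\<close> \<open>w \<noteq> 0\<close> by (simp add: field_simps)
  also have "(c + 1 + of_nat n) / w - 1 / 2 = of_nat (Suc n) / (2 * w)"
    using \<open>w \<noteq> 0\<close> by (simp add: w_def field_simps)
  also have "w * Q = (2 * c + 1) * pochhammer (2 * c + 2) n"
    unfolding w_def Q_def pochhammer_rec'[symmetric] by (simp add: pochhammer_rec add.assoc)
  ultimately show ?thesis
    by (simp add: P_def mult.assoc)
qed

lemma hyp3F2_term_Suc_diff_first: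
  "hyp3F2_term (a + 1) a2 a3 b1 b2 (Suc n) - hyp3F2_term a a2 a3 b1 b2 (Suc n) =
     a2 * a3 / (b1 * b2) * hyp3F2_term (a + 1) (a2 + 1) (a3 + 1) (b1 + 1) (b2 + 1) n"
proof -
  have "hyp3F2_term (a + 1) a2 a3 b1 b2 (Suc n) - hyp3F2_term a a2 a3 b1 b2 (Suc n) =
    (pochhammer (a + 1) (Suc n) - pochhammer a (Suc n)) * pochhammer a2 (Suc n) * pochhammer a3 (Suc n)
      / (fact (Suc n) * pochhammer b1 (Suc n) * pochhammer b2 (Suc n))"
    by (simp add: hyp3F2_term_def diff_divide_distrib algebra_simps)
  also have "\<dots> = a2 * a3 / (b1 * b2) * hyp3F2_term (a + 1) (a2 + 1) (a3 + 1) (b1 + 1) (b2 + 1) n"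
    unfolding pochhammer_Suc_diff
    by (simp add: hyp3F2_term_def pochhammer_rec divide_inverse inverse_mult_distrib mult_ac del: of_nat_Suc)
  finally show ?thesis .
qed

lemma hyp3F2_term_Suc_diff_c_2c:
  assumes "2 * c \<notin> \<int>\<^sub>\<le>\<^sub>0"
  shows "hyp3F2_term a1 a2 (c + 1) b1 (2 * c + 1) (Suc n) - hyp3F2_term a1 a2 c b1 (2 * c) (Suc n) =
     a1 * a2 / (2 * b1 * (2 * c + 1)) * hyp3F2_term (a1 + 1) (a2 + 1) (c + 1) (b1 + 1) (2 * c + 2) n"
proof -
  have "hyp3F2_term a1 a2 (c + 1) b1 (2 * c + 1) (Suc n) - hyp3F2_term a1 a2 c b1 (2 * c) (Suc n) =
    pochhammer a1 (Suc n) * pochhammer a2 (Suc n) / (fact (Suc n) * pochhammer b1 (Suc n))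
    * (pochhammer (c + 1) (Suc n) / pochhammer (2 * c + 1) (Suc n) - pochhammer c (Suc n) / pochhammer (2 * c) (Suc n))"
    by (simp add: hyp3F2_term_def divide_inverse inverse_mult_distrib algebra_simps del: of_nat_Suc)
  also have "\<dots> = pochhammer a1 (Suc n) * pochhammer a2 (Suc n) / (fact (Suc n) * pochhammer b1 (Suc n))
    * (of_nat (Suc n) * pochhammer (c + 1) n / (2 * (2 * c + 1) * pochhammer (2 * c + 2) n))"
    unfolding pochhammer_ratio_Suc_diff[OF assms] ..
  also have "\<dots> = a1 * a2 / (2 * b1 * (2 * c + 1)) * hyp3F2_term (a1 + 1) (a2 + 1) (c + 1) (b1 + 1) (2 * c + 2) n"
    by (simp add: hyp3F2_term_def pochhammer_rec divide_inverse inverse_mult_distrib mult_ac del: of_nat_Suc)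
  finally show ?thesis .
qed

lemma suminf_eq_of_Suc_diff:
  fixes f g h :: "nat \<Rightarrow> 'a :: real_normed_algebra"
  assumes "summable f" "summable g" "summable h"
    and "f 0 = g 0" and "\<And>n. f (Suc n) - g (Suc n) = c * h n"
  shows "suminf f = suminf g + c * suminf h"
proof -
  have "(\<lambda>n. f (Suc n) - g (Suc n)) sums (suminf f - f 0 - (suminf g - g 0))"
    using assms(1,2) by (intro sums_diff) (simp_all add: sums_Suc_iff summable_sums)
  moreover have "(\<lambda>n. f (Suc n) - g (Suc n)) sums (c * suminf h)"
    unfolding assms(5) using assms(3) by (intro sums_mult summable_sums)
  ultimately have "suminf f - f 0 - (suminf g - g 0) = c * suminf h"
    by (rule sums_unique2)
  with assms(4) show ?thesis
    by (simp add: algebra_simps)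
qed

lemma hyp3F2_contiguous_first:
  assumes "Re (b1 + b2 - (a + 1) - a2 - a3) > 0"
  shows "hyp3F2 (a + 1) a2 a3 b1 b2 =
    hyp3F2 a a2 a3 b1 b2 + a2 * a3 / (b1 * b2) * hyp3F2 (a + 1) (a2 + 1) (a3 + 1) (b1 + 1) (b2 + 1)"
  unfolding hyp3F2_eq_suminf
  by (intro suminf_eq_of_Suc_diff summable_hyp3F2_term hyp3F2_term_Suc_diff_first) (use assms in auto)

lemma hyp3F2_contiguous_c_2c:
  assumes "2 * c \<notin> \<int>\<^sub>\<le>\<^sub>0" and "Re (b1 + c - a1 - a2) > 0"
  shows "hyp3F2 a1 a2 (c + 1) b1 (2 * c + 1) =
    hyp3F2 a1 a2 c b1 (2 * c) + a1 * a2 / (2 * b1 * (2 * c + 1)) * hyp3F2 (a1 + 1) (a2 + 1) (c + 1) (b1 + 1) (2 * c + 2)"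
  unfolding hyp3F2_eq_suminf
  by (intro suminf_eq_of_Suc_diff summable_hyp3F2_term hyp3F2_term_Suc_diff_c_2c assms(1)) (use assms(2) in auto)

theorem mainTheorem12:
  fixes k :: nat and a b c :: complex
  assumes "k \<ge> 1"
    and "2 * c \<notin> \<int>\<^sub>\<le>\<^sub>0" and "2 * c + 2 \<notin> \<int>\<^sub>\<le>\<^sub>0"
    and "(a + b + 1) / 2 \<notin> \<int>\<^sub>\<le>\<^sub>0" and "(a + b + 3) / 2 \<notin> \<int>\<^sub>\<le>\<^sub>0"
    and "(a + b + 5) / 2 \<notin> \<int>\<^sub>\<le>\<^sub>0"
    and "2 * c + 1 \<noteq> 0"
    and "Re (2 * c - a - b - 2 * of_nat k + 1) > 0"
  shows "G k a b c = G (k - 1) a b c + b / (a + b + 1) *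
           ((a + of_nat k) * (b + 1) / ((2 * c + 1) * (a + b + 3)) * G (k - 1) (a + 2) (b + 2) (c + 1)
            + G (k - 1) (a + 1) (b + 1) c)"
proof -
  define A where "A = a + of_nat (k - 1)"
  define e where "e = (a + b + 1) / 2"
  have "a + of_nat k = A + 1"
    using assms(1) by (simp add: A_def of_nat_diff)
  then have G_eqs: "G k a b c = hyp3F2 (A + 1) b c e (2 * c)"
      "G (k - 1) a b c = hyp3F2 A b c e (2 * c)"
      "G (k - 1) (a + 1) (b + 1) c = hyp3F2 (A + 1) (b + 1) c (e + 1) (2 * c)"
      "G (k - 1) (a + 2) (b + 2) (c + 1) = hyp3F2 (A + 1 + 1) (b + 1 + 1) (c + 1) (e + 1 + 1) (2 * c + 2)"
    by (simp_all add: G_def A_def e_def field_simps)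
  have "Re (e + c - A - b - 1) = Re (2 * c - a - b - 2 * of_nat k + 1) / 2"
    using assms(1) by (simp add: A_def e_def of_nat_diff)
  with assms(8) have conv: "Re (e + c - A - b - 1) > 0"
    by simp
  have coeff1: "b * c / (e * (2 * c)) = b / (a + b + 1)"
    using assms(2) by (auto simp: e_def)
  have "2 * (e + 1) * (2 * c + 1) = (2 * c + 1) * (a + b + 3)"
    by (simp add: e_def field_simps)
  with \<open>a + of_nat k = A + 1\<close> have coeff2:
    "(A + 1) * (b + 1) / (2 * (e + 1) * (2 * c + 1)) = (a + of_nat k) * (b + 1) / ((2 * c + 1) * (a + b + 3))"
    by simp
  have "hyp3F2 (A + 1) b c e (2 * c) =
      hyp3F2 A b c e (2 * c) + b * c / (e * (2 * c)) * hyp3F2 (A + 1) (b + 1) (c + 1) (e + 1) (2 * c + 1)"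
    using conv by (intro hyp3F2_contiguous_first) simp
  also have "hyp3F2 (A + 1) (b + 1) (c + 1) (e + 1) (2 * c + 1) =
      hyp3F2 (A + 1) (b + 1) c (e + 1) (2 * c) + (A + 1) * (b + 1) / (2 * (e + 1) * (2 * c + 1))
        * hyp3F2 (A + 1 + 1) (b + 1 + 1) (c + 1) (e + 1 + 1) (2 * c + 2)"
    using conv by (intro hyp3F2_contiguous_c_2c assms(2)) simp
  finally show ?thesis
    unfolding G_eqs coeff1 coeff2 by (simp only: ac_simps)
qed

end
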